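(* Let $\Omega = [a,b)$ be a bounded interval with periodic boundary conditions, let $k \ge 0$ be an integer, let $T_k$ be the space of real-valued trigonometric polynomials on $\Omega$ of degree at most $k$, let $P$ denote the $L^2(\Omega)$-orthogonal projection onto $T_k$, and let $\beta \in \mathbb{R}$. Let $(v,w) \colon I \to T_k \times T_k$ (with $I$ an open time interval) be a continuously differentiable solution of the Fourier Galerkin semidiscretization of the nonlinear Schrödinger equation $\mathrm{i} u_t + u_{xx} + \beta |u|^2 u = 0$ written for $u = v + \mathrm{i} w$, \[ \begin{aligned} \partial_t v &= -w_{xx} - \beta P \bigl( (v^2 + w^2) w \bigr), \\ \partial_t w &= v_{xx} + \beta P \bigl( (v^2 + w^2) v \bigr). \end{aligned} \] Then the mass, momentum, and energy \[ \mathcal{M} = \int_\Omega ( v^2 + w^2 ) \,\mathrm{d}x, \qquad \mathcal{P} = \int_\Omega ( v w_x - w v_x ) \,\mathrm{d}x, \qquad \mathcal{E} = \int_\Omega \Bigl( v_x^2 + w_x^2 - \frac{\beta}{2} ( v^2 + w^2 )^2 \Bigr) \mathrm{d}x \] are constant in time along $(v,w)$.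
   Context: The semidiscretization is an ODE on the finite-dimensional space $T_k \times T_k$. *)

theory Defs
  imports "HOL-Analysis.Analysis"
begin

text \<open>Real trigonometric polynomials of degree at most k on the periodic interval [a,b),
  represented by their (b-a)-periodic extension to the whole real line.\<close>
definition trig_poly :: "real \<Rightarrow> real \<Rightarrow> nat \<Rightarrow> (real \<Rightarrow> real) set" where
  "trig_poly a b k = {f. \<exists>(c::nat \<Rightarrow> real) (s::nat \<Rightarrow> real). \<forall>x.
      f x = c 0 + (\<Sum>j=1..k. c j * cos (2 * pi * real j * (x - a) / (b - a))
                              + s j * sin (2 * pi * real j * (x - a) / (b - a)))}"

definition L2_proj :: "real \<Rightarrow> real \<Rightarrow> nat \<Rightarrow> (real \<Rightarrow> real) \<Rightarrow> (real \<Rightarrow> real)" where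
  "L2_proj a b k f = (THE g. g \<in> trig_poly a b k \<and>
      (\<forall>h \<in> trig_poly a b k. integral {a..b} (\<lambda>x. (f x - g x) * h x) = 0))"

definition nls_mass :: "real \<Rightarrow> real \<Rightarrow> (real \<Rightarrow> real) \<Rightarrow> (real \<Rightarrow> real) \<Rightarrow> real" where
  "nls_mass a b v w = integral {a..b} (\<lambda>x. (v x)\<^sup>2 + (w x)\<^sup>2)"

definition nls_momentum :: "real \<Rightarrow> real \<Rightarrow> (real \<Rightarrow> real) \<Rightarrow> (real \<Rightarrow> real) \<Rightarrow> real" where
  "nls_momentum a b v w = integral {a..b} (\<lambda>x. v x * deriv w x - w x * deriv v x)"

definition nls_energy :: "real \<Rightarrow> real \<Rightarrow> real \<Rightarrow> (real \<Rightarrow> real) \<Rightarrow> (real \<Rightarrow> real) \<Rightarrow> real" where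
  "nls_energy \<beta> a b v w = integral {a..b}
     (\<lambda>x. (deriv v x)\<^sup>2 + (deriv w x)\<^sup>2 - \<beta> / 2 * ((v x)\<^sup>2 + (w x)\<^sup>2)\<^sup>2)"

end

theory Submission
  imports Defs
begin

text \<open>
  Differentiating the three densities in time under the integral sign, the rates of change become
  integrals of the velocities v', w' against v, w, their x-derivatives and the cubic terms.
  After substituting the equations, the linear parts cancel by integration by parts (elements of
  T_k are periodic, so boundary terms vanish), and the projection P drops out because
  int (P f) h = int f h for every h in T_k: it is tested against v, w for the mass, against
  v_x, w_x for the momentum, and against v', w' (which lie in T_k as well) for the energy.
  What remains is the x-derivative of the periodic function (v^2 + w^2)^2 / 4.

  Differentiating under the integral needs joint continuity in (t, x), which comes from finite
  dimensionality: every element of T_k is the interpolant of its values at 2k + 1 equispaced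
  nodes, so v t = sum_m v t (node m) * kernel_m with fixed kernels in T_k, and the pointwise
  time derivative passes to these finitely many coefficients.
\<close>

lemma sum_cis_harmonic:
  assumes N: "0 < N" and n: "\<not> int N dvd n"
  shows "(\<Sum>m<N. cis (2 * pi * of_int n * real m / real N)) = 0"
proof -
  define z where "z = cis (2 * pi * of_int n / real N)"
  have z_pow: "z ^ m = cis (2 * pi * of_int n * real m / real N)" for m
    by (simp add: z_def Complex.DeMoivre mult_ac)
  have "z ^ N = 1"
    using N by (simp add: z_pow)
  moreover have "z \<noteq> 1"
  proof
    assume "z = 1"
    then have "cos (2 * pi * of_int n / real N) = 1"
      by (simp add: z_def complex_eq_iff)
    then obtain j :: int where "2 * pi * of_int n / real N = of_int j * 2 * pi"
      by (auto simp: cos_one_2pi_int)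
    then have "of_int n = (of_int (j * int N) :: real)"
      using N by (simp add: field_simps)
    then have "n = j * int N"
      by (simp only: of_int_eq_iff)
    with n show False
      by simp
  qed
  ultimately show ?thesis
    by (simp add: z_pow[symmetric] sum_gp_strict)
qed

lemma integral_periodic_derivative_zero:
  fixes F f :: "real \<Rightarrow> real"
  assumes "a \<le> b" and "\<And>x. x \<in> {a..b} \<Longrightarrow> (F has_real_derivative f x) (at x)" and "F b = F a"
  shows "integral {a..b} f = 0"
proof -
  have "(f has_integral F b - F a) {a..b}"
    using assms by (intro fundamental_theorem_of_calculus)
      (auto intro: has_field_derivative_at_within simp flip: has_real_derivative_iff_has_vector_derivative)
  then show ?thesis
    using assms(3) by (simp add: integral_unique)
qed

lemma continuous_on_separated_sum:
  fixes \<alpha> \<phi> :: "nat \<Rightarrow> real \<Rightarrow> real"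
  assumes "\<And>m. m \<in> A \<Longrightarrow> continuous_on I (\<alpha> m)" and "\<And>m. m \<in> A \<Longrightarrow> continuous_on S (\<phi> m)"
  shows "continuous_on (I \<times> S) (\<lambda>p. \<Sum>m\<in>A. \<alpha> m (fst p) * \<phi> m (snd p))"
proof (intro continuous_on_sum continuous_on_mult)
  fix m assume m: "m \<in> A"
  show "continuous_on (I \<times> S) (\<lambda>p. \<alpha> m (fst p))"
    by (rule continuous_on_compose2[OF assms(1)[OF m] continuous_on_fst[OF continuous_on_id]]) auto
  show "continuous_on (I \<times> S) (\<lambda>p. \<phi> m (snd p))"
    by (rule continuous_on_compose2[OF assms(2)[OF m] continuous_on_snd[OF continuous_on_id]]) auto
qed

lemma integral_parametric_constant:
  fixes F F' :: "real \<Rightarrow> real \<Rightarrow> real"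
  assumes I: "convex I"
    and has_deriv: "\<And>t x. t \<in> I \<Longrightarrow> x \<in> {a..b} \<Longrightarrow> ((\<lambda>s. F s x) has_real_derivative F' t x) (at t within I)"
    and cont: "\<And>t. t \<in> I \<Longrightarrow> continuous_on {a..b} (F t)"
    and cont': "continuous_on (I \<times> {a..b}) (\<lambda>(t, x). F' t x)"
    and rate_zero: "\<And>t. t \<in> I \<Longrightarrow> integral {a..b} (F' t) = 0"
    and t12: "t1 \<in> I" "t2 \<in> I"
  shows "integral {a..b} (F t1) = integral {a..b} (F t2)"
proof -
  have "((\<lambda>s. integral (cbox a b) (F s)) has_real_derivative 0) (at t within I)" if t: "t \<in> I" for t
    using leibniz_rule_field_derivative[of I a b F F' t] has_deriv cont cont' t I rate_zero[OF t]
    by (simp add: integrable_continuous_interval)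
  then obtain C where "\<forall>t\<in>I. integral (cbox a b) (F t) = C"
    using has_field_derivative_zero_constant[OF I] by blast
  with t12 show ?thesis
    by simp
qed

section \<open>Trigonometric polynomials\<close>

locale trig_poly_space =
  fixes a b :: real and k :: nat
  assumes a_less_b: "a < b"
begin

definition freq :: real where
  "freq = 2 * pi / (b - a)"

definition cos_mode :: "nat \<Rightarrow> real \<Rightarrow> real" where
  "cos_mode j x = cos (real j * freq * (x - a))"

definition sin_mode :: "nat \<Rightarrow> real \<Rightarrow> real" where
  "sin_mode j x = sin (real j * freq * (x - a))"

definition trig_comb :: "(nat \<Rightarrow> real) \<Rightarrow> (nat \<Rightarrow> real) \<Rightarrow> real \<Rightarrow> real" where
  "trig_comb c s x = (\<Sum>j\<le>k. c j * cos_mode j x + s j * sin_mode j x)"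

lemma freq_period: "freq * (b - a) = 2 * pi"
  using a_less_b by (simp add: freq_def)

lemma sin_mode_0 [simp]: "sin_mode 0 x = 0"
  by (simp add: sin_mode_def)

lemma trig_poly_iff: "f \<in> trig_poly a b k \<longleftrightarrow> (\<exists>c s. f = trig_comb c s)"
proof -
  have "2 * pi * real j * (x - a) / (b - a) = real j * freq * (x - a)" for j x
    by (simp add: freq_def)
  then have "trig_comb c s x = c 0 + (\<Sum>j=1..k. c j * cos (2 * pi * real j * (x - a) / (b - a))
      + s j * sin (2 * pi * real j * (x - a) / (b - a)))" for c s x
    by (simp add: trig_comb_def atMost_atLeast0 sum.atLeast_Suc_atMost cos_mode_def sin_mode_def)
  then show ?thesis
    unfolding trig_poly_def by (auto simp: fun_eq_iff)
qed

lemma trig_comb_in_trig_poly [intro]: "trig_comb c s \<in> trig_poly a b k"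
  unfolding trig_poly_iff by blast

lemma cos_mode_in_trig_poly: "j \<le> k \<Longrightarrow> cos_mode j \<in> trig_poly a b k"
proof -
  assume "j \<le> k"
  then have "cos_mode j = trig_comb (\<lambda>i. if i = j then 1 else 0) (\<lambda>_. 0)"
    by (simp add: trig_comb_def fun_eq_iff if_distrib[of "\<lambda>y. y * _"] cong: if_cong)
  then show ?thesis by auto
qed

lemma sin_mode_in_trig_poly: "j \<le> k \<Longrightarrow> sin_mode j \<in> trig_poly a b k"
proof -
  assume "j \<le> k"
  then have "sin_mode j = trig_comb (\<lambda>_. 0) (\<lambda>i. if i = j then 1 else 0)"
    by (simp add: trig_comb_def fun_eq_iff if_distrib[of "\<lambda>y. y * _"] cong: if_cong)
  then show ?thesis by auto
qed

lemma sum_trig_comb: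
  "(\<Sum>m\<in>A. y m * trig_comb (c m) (s m) x)
     = trig_comb (\<lambda>j. \<Sum>m\<in>A. y m * c m j) (\<lambda>j. \<Sum>m\<in>A. y m * s m j) x"
  unfolding trig_comb_def sum_distrib_left sum_distrib_right
  by (subst sum.swap) (simp add: sum.distrib algebra_simps)

lemma trig_poly_lincomb:
  assumes "f \<in> trig_poly a b k" and "g \<in> trig_poly a b k"
  shows "(\<lambda>x. c * f x + d * g x) \<in> trig_poly a b k"
proof -
  obtain c1 s1 c2 s2 where "f = trig_comb c1 s1" and "g = trig_comb c2 s2"
    using assms trig_poly_iff by metis
  then have "(\<lambda>x. c * f x + d * g x) = trig_comb (\<lambda>j. c * c1 j + d * c2 j) (\<lambda>j. c * s1 j + d * s2 j)"
    by (simp add: fun_eq_iff trig_comb_def sum_distrib_left sum.distrib[symmetric] algebra_simps)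
  then show ?thesis
    by auto
qed

lemma trig_comb_cong:
  assumes "\<And>j. j \<le> k \<Longrightarrow> c j = c' j" and "\<And>j. 0 < j \<Longrightarrow> j \<le> k \<Longrightarrow> s j = s' j"
  shows "trig_comb c s = trig_comb c' s'"
  unfolding trig_comb_def[abs_def]
proof (intro ext sum.cong refl)
  fix x j assume "j \<in> {..k}"
  with assms show "c j * cos_mode j x + s j * sin_mode j x = c' j * cos_mode j x + s' j * sin_mode j x"
    by (cases "j = 0") auto
qed

lemma cos_mode_continuous_on [continuous_intros]: "continuous_on S (cos_mode j)"
  unfolding cos_mode_def by (intro continuous_intros)

lemma sin_mode_continuous_on [continuous_intros]: "continuous_on S (sin_mode j)"
  unfolding sin_mode_def by (intro continuous_intros)

lemma trig_comb_continuous_on: "continuous_on S (trig_comb c s)"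
  unfolding trig_comb_def[abs_def] by (intro continuous_intros)

lemma trig_poly_continuous_on:
  "f \<in> trig_poly a b k \<Longrightarrow> continuous_on S f"
  using trig_comb_continuous_on by (auto simp: trig_poly_iff)

lemma trig_comb_has_derivative:
  "(trig_comb c s has_real_derivative
      trig_comb (\<lambda>j. real j * freq * s j) (\<lambda>j. - (real j * freq * c j)) x) (at x)"
proof -
  have "(trig_comb c s has_real_derivative
      (\<Sum>j\<le>k. c j * (- (real j * freq) * sin_mode j x) + s j * (real j * freq * cos_mode j x))) (at x)"
    unfolding trig_comb_def[abs_def] cos_mode_def sin_mode_def
    by (auto intro!: derivative_eq_intros simp: algebra_simps)
  then show ?thesis
    by (simp add: trig_comb_def algebra_simps)
qed

lemma deriv_trig_comb:
  "deriv (trig_comb c s) = trig_comb (\<lambda>j. real j * freq * s j) (\<lambda>j. - (real j * freq * c j))"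
  using trig_comb_has_derivative DERIV_imp_deriv by blast

lemma trig_poly_has_derivative:
  "f \<in> trig_poly a b k \<Longrightarrow> (f has_real_derivative deriv f x) (at x)"
  unfolding trig_poly_iff using trig_comb_has_derivative deriv_trig_comb by auto

lemma deriv_in_trig_poly [intro]: "f \<in> trig_poly a b k \<Longrightarrow> deriv f \<in> trig_poly a b k"
  unfolding trig_poly_iff using deriv_trig_comb by auto

lemma trig_poly_periodic:
  assumes "f \<in> trig_poly a b k"
  shows "f b = f a"
proof -
  have "real j * freq * (b - a) = 2 * pi * of_int (int j)" for j
    using freq_period by (simp add: algebra_simps)
  then have "cos_mode j b = 1" "sin_mode j b = 0" for j
    unfolding cos_mode_def sin_mode_def by (simp_all only: cos_int_2pin sin_int_2pin)
  then show ?thesis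
    using assms by (auto simp: trig_poly_iff trig_comb_def cos_mode_def sin_mode_def)
qed

lemma integral_deriv_mult_trig_poly:
  assumes f: "f \<in> trig_poly a b k" and g: "g \<in> trig_poly a b k"
  shows "integral {a..b} (\<lambda>x. deriv f x * g x) = - integral {a..b} (\<lambda>x. f x * deriv g x)"
proof -
  have "integral {a..b} (\<lambda>x. deriv f x * g x + f x * deriv g x) = 0"
    using a_less_b trig_poly_periodic[OF f] trig_poly_periodic[OF g]
    by (intro integral_periodic_derivative_zero[where F = "\<lambda>x. f x * g x"])
      (auto intro!: derivative_eq_intros trig_poly_has_derivative f g)
  moreover have "integral {a..b} (\<lambda>x. deriv f x * g x + f x * deriv g x)
      = integral {a..b} (\<lambda>x. deriv f x * g x) + integral {a..b} (\<lambda>x. f x * deriv g x)"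
    by (intro integral_add integrable_continuous_interval continuous_intros trig_poly_continuous_on
        deriv_in_trig_poly f g)
  ultimately show ?thesis
    by simp
qed

lemma integral_deriv_mult_self_trig_poly:
  "f \<in> trig_poly a b k \<Longrightarrow> integral {a..b} (\<lambda>x. deriv f x * f x) = 0"
  using integral_deriv_mult_trig_poly[of f f] by (simp add: mult.commute)

lemma integral_mult_second_deriv_trig_poly:
  assumes f: "f \<in> trig_poly a b k" and g: "g \<in> trig_poly a b k"
  shows "integral {a..b} (\<lambda>x. f x * deriv (deriv g) x) = integral {a..b} (\<lambda>x. g x * deriv (deriv f) x)"
  using integral_deriv_mult_trig_poly[OF deriv_in_trig_poly[OF g] f]
    integral_deriv_mult_trig_poly[OF deriv_in_trig_poly[OF f] g]
  by (simp add: mult.commute)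

end

section \<open>Exact quadrature, Fourier coefficients and orthogonal projection\<close>

text \<open>
  L integrates trigonometric polynomials of degree at most 2k exactly. The orthogonality relations
  and Fourier coefficients are derived once for two instances: the integral over [a, b], which
  yields the L^2 projection, and the rectangle rule at 2k + 1 equispaced nodes, which yields the
  interpolation formula.
\<close>
locale trig_quadrature = trig_poly_space +
  fixes L :: "(real \<Rightarrow> real) \<Rightarrow> real" and \<mu> :: real
  assumes L_add: "continuous_on UNIV f \<Longrightarrow> continuous_on UNIV g \<Longrightarrow> L (\<lambda>x. f x + g x) = L f + L g"
    and L_cmult: "L (\<lambda>x. c * f x) = c * L f"
    and L_cos: "\<bar>n\<bar> \<le> 2 * int k \<Longrightarrow> L (\<lambda>x. cos (of_int n * freq * (x - a))) = (if n = 0 then \<mu> else 0)"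
    and L_sin: "\<bar>n\<bar> \<le> 2 * int k \<Longrightarrow> L (\<lambda>x. sin (of_int n * freq * (x - a))) = 0"
    and weight_pos: "\<mu> > 0"
begin

lemma L_zero: "L (\<lambda>x. 0) = 0"
  using L_cmult[of 0 "\<lambda>x. 0"] by simp

lemma L_diff:
  assumes "continuous_on UNIV f" and "continuous_on UNIV g"
  shows "L (\<lambda>x. f x - g x) = L f - L g"
  using L_add[OF assms(1) continuous_on_mult_left[OF assms(2)], of "- 1"] L_cmult[of "- 1" g] by simp

lemma L_diff_mult:
  assumes "continuous_on UNIV f" and "continuous_on UNIV g" and "continuous_on UNIV m"
  shows "L (\<lambda>x. (f x - g x) * m x) = L (\<lambda>x. f x * m x) - L (\<lambda>x. g x * m x)"
  using L_diff[of "\<lambda>x. f x * m x" "\<lambda>x. g x * m x"] assms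
  by (simp add: left_diff_distrib continuous_on_mult)

lemma L_half_sum:
  assumes "continuous_on UNIV f" and "continuous_on UNIV g"
  shows "L (\<lambda>x. (f x + g x) / 2) = (L f + L g) / 2"
  using L_cmult[of "1 / 2" "\<lambda>x. f x + g x"] by (simp add: L_add assms)

lemma L_half_diff:
  assumes "continuous_on UNIV f" and "continuous_on UNIV g"
  shows "L (\<lambda>x. (f x - g x) / 2) = (L f - L g) / 2"
  using L_cmult[of "1 / 2" "\<lambda>x. f x - g x"] by (simp add: L_diff assms)

lemma L_sum:
  assumes "finite A" and "\<And>i. i \<in> A \<Longrightarrow> continuous_on UNIV (f i)"
  shows "L (\<lambda>x. \<Sum>i\<in>A. f i x) = (\<Sum>i\<in>A. L (f i))"
  using assms
proof (induction A rule: finite_induct)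
  case (insert i A)
  then have "L (\<lambda>x. f i x + (\<Sum>i\<in>A. f i x)) = L (f i) + L (\<lambda>x. \<Sum>i\<in>A. f i x)"
    by (intro L_add continuous_on_sum) (simp_all add: insert.prems)
  with insert show ?case by simp
qed (simp add: L_zero)

lemma L_cos_mode_cos_mode:
  assumes "j \<le> k" and "l \<le> k"
  shows "L (\<lambda>x. cos_mode j x * cos_mode l x) = (if j = l then if j = 0 then \<mu> else \<mu> / 2 else 0)"
proof -
  define p q where "p = int j - int l" and "q = int j + int l"
  have eq: "(\<lambda>x. cos_mode j x * cos_mode l x) =
      (\<lambda>x. (cos (of_int p * freq * (x - a)) + cos (of_int q * freq * (x - a))) / 2)"
    unfolding cos_mode_def cos_times_cos p_def q_def by (simp add: algebra_simps)
  have pq_bounds: "\<bar>p\<bar> \<le> 2 * int k" "\<bar>q\<bar> \<le> 2 * int k"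
    using assms by (auto simp: p_def q_def)
  have "L (\<lambda>x. cos_mode j x * cos_mode l x)
      = (L (\<lambda>x. cos (of_int p * freq * (x - a))) + L (\<lambda>x. cos (of_int q * freq * (x - a)))) / 2"
    unfolding eq by (intro L_half_sum continuous_intros)
  also have "\<dots> = (if j = l then if j = 0 then \<mu> else \<mu> / 2 else 0)"
    using pq_bounds by (simp add: L_cos) (auto simp: p_def q_def)
  finally show ?thesis .
qed

lemma L_sin_mode_sin_mode:
  assumes "j \<le> k" and "l \<le> k"
  shows "L (\<lambda>x. sin_mode j x * sin_mode l x) = (if j = l \<and> j \<noteq> 0 then \<mu> / 2 else 0)"
proof -
  define p q where "p = int j - int l" and "q = int j + int l"
  have eq: "(\<lambda>x. sin_mode j x * sin_mode l x) =
      (\<lambda>x. (cos (of_int p * freq * (x - a)) - cos (of_int q * freq * (x - a))) / 2)"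
    unfolding sin_mode_def sin_times_sin p_def q_def by (simp add: algebra_simps)
  have pq_bounds: "\<bar>p\<bar> \<le> 2 * int k" "\<bar>q\<bar> \<le> 2 * int k"
    using assms by (auto simp: p_def q_def)
  have "L (\<lambda>x. sin_mode j x * sin_mode l x)
      = (L (\<lambda>x. cos (of_int p * freq * (x - a))) - L (\<lambda>x. cos (of_int q * freq * (x - a)))) / 2"
    unfolding eq by (intro L_half_diff continuous_intros)
  also have "\<dots> = (if j = l \<and> j \<noteq> 0 then \<mu> / 2 else 0)"
    using pq_bounds by (simp add: L_cos) (auto simp: p_def q_def)
  finally show ?thesis .
qed

lemma L_sin_mode_cos_mode:
  assumes "j \<le> k" and "l \<le> k"
  shows "L (\<lambda>x. sin_mode j x * cos_mode l x) = 0"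
proof -
  define p q where "p = int j + int l" and "q = int j - int l"
  have eq: "(\<lambda>x. sin_mode j x * cos_mode l x) =
      (\<lambda>x. (sin (of_int p * freq * (x - a)) + sin (of_int q * freq * (x - a))) / 2)"
    unfolding sin_mode_def cos_mode_def sin_times_cos p_def q_def by (simp add: algebra_simps)
  have pq_bounds: "\<bar>p\<bar> \<le> 2 * int k" "\<bar>q\<bar> \<le> 2 * int k"
    using assms by (auto simp: p_def q_def)
  have "L (\<lambda>x. sin_mode j x * cos_mode l x)
      = (L (\<lambda>x. sin (of_int p * freq * (x - a))) + L (\<lambda>x. sin (of_int q * freq * (x - a)))) / 2"
    unfolding eq by (intro L_half_sum continuous_intros)
  also have "\<dots> = 0"
    using pq_bounds by (simp add: L_sin)
  finally show ?thesis .
qed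

lemma L_cos_mode_sin_mode:
  "j \<le> k \<Longrightarrow> l \<le> k \<Longrightarrow> L (\<lambda>x. cos_mode l x * sin_mode j x) = 0"
  using L_sin_mode_cos_mode by (simp add: mult.commute)

lemma L_mult_trig_comb:
  assumes "continuous_on UNIV r"
  shows "L (\<lambda>x. r x * trig_comb c s x)
    = (\<Sum>j\<le>k. c j * L (\<lambda>x. r x * cos_mode j x) + s j * L (\<lambda>x. r x * sin_mode j x))"
proof -
  have "(\<lambda>x. r x * trig_comb c s x)
      = (\<lambda>x. \<Sum>j\<le>k. c j * (r x * cos_mode j x) + s j * (r x * sin_mode j x))"
    by (simp add: trig_comb_def sum_distrib_left algebra_simps)
  then show ?thesis
    using assms by (simp add: L_sum L_add L_cmult continuous_intros)
qed

lemma L_trig_comb_mult_cos_mode: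
  assumes "l \<le> k"
  shows "L (\<lambda>x. trig_comb c s x * cos_mode l x) = (if l = 0 then \<mu> else \<mu> / 2) * c l"
proof -
  have "L (\<lambda>x. trig_comb c s x * cos_mode l x) = L (\<lambda>x. cos_mode l x * trig_comb c s x)"
    by (simp add: mult.commute)
  also have "\<dots> = (\<Sum>j\<le>k. c j * (if l = j then if l = 0 then \<mu> else \<mu> / 2 else 0))"
    using assms by (simp add: L_mult_trig_comb continuous_intros L_cos_mode_cos_mode L_cos_mode_sin_mode)
  also have "\<dots> = (if l = 0 then \<mu> else \<mu> / 2) * c l"
    using assms by (simp add: if_distrib[of "\<lambda>y. c _ * y"] cong: if_cong)
  finally show ?thesis .
qed

lemma L_trig_comb_mult_sin_mode:
  assumes "l \<le> k"
  shows "L (\<lambda>x. trig_comb c s x * sin_mode l x) = (if l = 0 then 0 else \<mu> / 2 * s l)"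
proof -
  have "L (\<lambda>x. trig_comb c s x * sin_mode l x) = L (\<lambda>x. sin_mode l x * trig_comb c s x)"
    by (simp add: mult.commute)
  also have "\<dots> = (\<Sum>j\<le>k. s j * (if l = j \<and> l \<noteq> 0 then \<mu> / 2 else 0))"
    using assms by (simp add: L_mult_trig_comb continuous_intros L_sin_mode_sin_mode L_sin_mode_cos_mode)
  also have "\<dots> = (if l = 0 then 0 else \<mu> / 2 * s l)"
    using assms by (simp add: if_distrib[of "\<lambda>y. s _ * y"] mult.commute cong: if_cong)
  finally show ?thesis .
qed

definition coeff_cos :: "(real \<Rightarrow> real) \<Rightarrow> nat \<Rightarrow> real" where
  "coeff_cos f j = (if j = 0 then 1 else 2) / \<mu> * L (\<lambda>x. f x * cos_mode j x)"

definition coeff_sin :: "(real \<Rightarrow> real) \<Rightarrow> nat \<Rightarrow> real" where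
  "coeff_sin f j = 2 / \<mu> * L (\<lambda>x. f x * sin_mode j x)"

lemma trig_comb_coeff:
  assumes "f \<in> trig_poly a b k"
  shows "trig_comb (coeff_cos f) (coeff_sin f) = f"
proof -
  obtain c s where f: "f = trig_comb c s"
    using assms trig_poly_iff by blast
  show ?thesis
    using weight_pos unfolding f
    by (intro trig_comb_cong) (simp_all add: coeff_cos_def coeff_sin_def
        L_trig_comb_mult_cos_mode L_trig_comb_mult_sin_mode)
qed

lemma trig_comb_coeff_eq_if_moments_eq:
  assumes g: "g \<in> trig_poly a b k"
    and cos_eq: "\<And>j. j \<le> k \<Longrightarrow> L (\<lambda>x. g x * cos_mode j x) = L (\<lambda>x. f x * cos_mode j x)"
    and sin_eq: "\<And>j. j \<le> k \<Longrightarrow> L (\<lambda>x. g x * sin_mode j x) = L (\<lambda>x. f x * sin_mode j x)"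
  shows "g = trig_comb (coeff_cos f) (coeff_sin f)"
proof -
  have "g = trig_comb (coeff_cos g) (coeff_sin g)"
    using trig_comb_coeff[OF g] by simp
  also have "\<dots> = trig_comb (coeff_cos f) (coeff_sin f)"
    by (intro trig_comb_cong) (simp_all add: coeff_cos_def coeff_sin_def cos_eq sin_eq)
  finally show ?thesis .
qed

lemma L_residual_orthogonal:
  assumes f: "continuous_on UNIV f" and h: "h \<in> trig_poly a b k"
  shows "L (\<lambda>x. (f x - trig_comb (coeff_cos f) (coeff_sin f) x) * h x) = 0"
proof -
  define p where "p = trig_comb (coeff_cos f) (coeff_sin f)"
  have p_cont: "continuous_on UNIV p"
    unfolding p_def by (rule trig_comb_continuous_on)
  have cos_eq: "L (\<lambda>x. (f x - p x) * cos_mode j x) = 0" if "j \<le> k" for j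
    using that weight_pos f p_cont
    by (simp add: L_diff_mult continuous_intros p_def L_trig_comb_mult_cos_mode coeff_cos_def)
  have sin_eq: "L (\<lambda>x. (f x - p x) * sin_mode j x) = 0" if "j \<le> k" for j
    using that weight_pos f p_cont
    by (simp add: L_diff_mult continuous_intros p_def L_trig_comb_mult_sin_mode coeff_sin_def L_zero)
  obtain c s where "h = trig_comb c s"
    using h trig_poly_iff by blast
  then show ?thesis
    using f p_cont by (simp add: p_def[symmetric] L_mult_trig_comb continuous_on_diff cos_eq sin_eq)
qed

definition orth_proj :: "(real \<Rightarrow> real) \<Rightarrow> real \<Rightarrow> real" where
  "orth_proj f = (THE g. g \<in> trig_poly a b k \<and> (\<forall>h\<in>trig_poly a b k. L (\<lambda>x. (f x - g x) * h x) = 0))"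

lemma orth_proj_eq:
  assumes f: "continuous_on UNIV f"
  shows "orth_proj f = trig_comb (coeff_cos f) (coeff_sin f)"
  unfolding orth_proj_def
proof (rule the_equality)
  show "trig_comb (coeff_cos f) (coeff_sin f) \<in> trig_poly a b k \<and>
      (\<forall>h\<in>trig_poly a b k. L (\<lambda>x. (f x - trig_comb (coeff_cos f) (coeff_sin f) x) * h x) = 0)"
    using L_residual_orthogonal[OF f] by blast
  fix g
  assume g: "g \<in> trig_poly a b k \<and> (\<forall>h\<in>trig_poly a b k. L (\<lambda>x. (f x - g x) * h x) = 0)"
  have "L (\<lambda>x. g x * m x) = L (\<lambda>x. f x * m x)" if "m \<in> trig_poly a b k" for m
    using g that f L_diff_mult[of f g m] trig_poly_continuous_on by auto
  then show "g = trig_comb (coeff_cos f) (coeff_sin f)"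
    using g cos_mode_in_trig_poly sin_mode_in_trig_poly
    by (intro trig_comb_coeff_eq_if_moments_eq) auto
qed

lemma orth_proj_in_trig_poly:
  "continuous_on UNIV f \<Longrightarrow> orth_proj f \<in> trig_poly a b k"
  using trig_comb_in_trig_poly by (simp add: orth_proj_eq)

lemma L_orth_proj_mult:
  assumes f: "continuous_on UNIV f" and h: "h \<in> trig_poly a b k"
  shows "L (\<lambda>x. orth_proj f x * h x) = L (\<lambda>x. f x * h x)"
  using L_residual_orthogonal[OF assms] L_diff_mult[OF f trig_comb_continuous_on trig_poly_continuous_on[OF h]]
  by (simp add: orth_proj_eq[OF f])

end

context trig_poly_space
begin

lemma integral_cos_harmonic:
  "integral {a..b} (\<lambda>x. cos (of_int n * freq * (x - a))) = (if n = 0 then b - a else 0)"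
proof (cases "n = 0")
  case False
  have "((\<lambda>x. cos (of_int n * freq * (x - a))) has_integral
      sin (of_int n * freq * (b - a)) / (of_int n * freq)
        - sin (of_int n * freq * (a - a)) / (of_int n * freq)) {a..b}"
    using a_less_b False freq_period
    by (intro fundamental_theorem_of_calculus)
      (auto intro!: derivative_eq_intros simp: has_real_derivative_iff_has_vector_derivative[symmetric])
  moreover have "of_int n * freq * (b - a) = 2 * pi * of_int n"
    using freq_period by (simp add: algebra_simps)
  ultimately show ?thesis
    using False by (simp add: integral_unique)
qed (use a_less_b in simp)

lemma integral_sin_harmonic:
  "integral {a..b} (\<lambda>x. sin (of_int n * freq * (x - a))) = 0"
proof (cases "n = 0")
  case False
  have "((\<lambda>x. sin (of_int n * freq * (x - a))) has_integral
      - cos (of_int n * freq * (b - a)) / (of_int n * freq)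
        - - cos (of_int n * freq * (a - a)) / (of_int n * freq)) {a..b}"
    using a_less_b False freq_period
    by (intro fundamental_theorem_of_calculus)
      (auto intro!: derivative_eq_intros simp: has_real_derivative_iff_has_vector_derivative[symmetric])
  moreover have "of_int n * freq * (b - a) = 2 * pi * of_int n"
    using freq_period by (simp add: algebra_simps)
  ultimately show ?thesis
    by (simp add: integral_unique)
qed simp

definition node :: "nat \<Rightarrow> real" where
  "node m = a + real m * (b - a) / real (2 * k + 1)"

lemma harmonic_at_node:
  "of_int n * freq * (node m - a) = 2 * pi * of_int n * real m / real (2 * k + 1)"
proof -
  have "freq * (node m - a) = 2 * pi * real m / real (2 * k + 1)"
    using a_less_b by (simp add: node_def freq_def)
  then show ?thesis
    by (simp add: mult.assoc)
qed

lemma sum_cos_harmonic_nodes: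
  assumes "\<bar>n\<bar> \<le> 2 * int k"
  shows "(\<Sum>m<2 * k + 1. cos (of_int n * freq * (node m - a))) = (if n = 0 then real (2 * k + 1) else 0)"
proof (cases "n = 0")
  case False
  then have "(\<Sum>m<2 * k + 1. cis (2 * pi * of_int n * real m / real (2 * k + 1))) = 0"
    using assms dvd_imp_le_int[of n "int (2 * k + 1)"] by (intro sum_cis_harmonic) auto
  then have "Re (\<Sum>m<2 * k + 1. cis (2 * pi * of_int n * real m / real (2 * k + 1))) = 0"
    by simp
  then show ?thesis
    using False by (simp only: Re_sum cis.sel harmonic_at_node) simp
qed simp

lemma sum_sin_harmonic_nodes:
  assumes "\<bar>n\<bar> \<le> 2 * int k"
  shows "(\<Sum>m<2 * k + 1. sin (of_int n * freq * (node m - a))) = 0"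
proof (cases "n = 0")
  case False
  then have "(\<Sum>m<2 * k + 1. cis (2 * pi * of_int n * real m / real (2 * k + 1))) = 0"
    using assms dvd_imp_le_int[of n "int (2 * k + 1)"] by (intro sum_cis_harmonic) auto
  then have "Im (\<Sum>m<2 * k + 1. cis (2 * pi * of_int n * real m / real (2 * k + 1))) = 0"
    by simp
  then show ?thesis
    by (simp only: Im_sum cis.sel harmonic_at_node)
qed simp

end

sublocale trig_poly_space \<subseteq> fourier: trig_quadrature a b k "\<lambda>f. integral {a..b} f" "b - a"
proof unfold_locales
  fix f g :: "real \<Rightarrow> real"
  assume "continuous_on UNIV f" "continuous_on UNIV g"
  then show "integral {a..b} (\<lambda>x. f x + g x) = integral {a..b} f + integral {a..b} g"
    by (intro integral_add integrable_continuous_interval) (auto intro: continuous_on_subset)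
qed (use a_less_b in \<open>simp_all add: integral_cos_harmonic integral_sin_harmonic\<close>)

sublocale trig_poly_space \<subseteq> sampling: trig_quadrature a b k "\<lambda>f. \<Sum>m<2 * k + 1. f (node m)" "real (2 * k + 1)"
proof unfold_locales
  show "(\<Sum>m<2 * k + 1. f (node m) + g (node m))
      = (\<Sum>m<2 * k + 1. f (node m)) + (\<Sum>m<2 * k + 1. g (node m))"
    for f g :: "real \<Rightarrow> real"
    by (rule sum.distrib)
  show "(\<Sum>m<2 * k + 1. c * f (node m)) = c * (\<Sum>m<2 * k + 1. f (node m))"
    for c :: real and f :: "real \<Rightarrow> real"
    by (simp only: sum_distrib_left)
qed (simp_all only: sum_cos_harmonic_nodes sum_sin_harmonic_nodes of_nat_0_less_iff zero_less_Suc Suc_eq_plus1)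

context trig_poly_space
begin

lemma L2_proj_eq_orth_proj: "L2_proj a b k f = fourier.orth_proj f"
  by (simp add: L2_proj_def fourier.orth_proj_def)

lemma L2_proj_in_trig_poly: "continuous_on UNIV f \<Longrightarrow> L2_proj a b k f \<in> trig_poly a b k"
  unfolding L2_proj_eq_orth_proj by (rule fourier.orth_proj_in_trig_poly)

lemma integral_L2_proj_mult:
  "continuous_on UNIV f \<Longrightarrow> h \<in> trig_poly a b k \<Longrightarrow>
    integral {a..b} (\<lambda>x. L2_proj a b k f x * h x) = integral {a..b} (\<lambda>x. f x * h x)"
  unfolding L2_proj_eq_orth_proj by (rule fourier.L_orth_proj_mult)

end

section \<open>Interpolation at equispaced nodes\<close>

context trig_poly_space
begin

text \<open>Obtained by substituting the discrete Fourier coefficients \<open>sampling.coeff_cos\<close>,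
  \<open>sampling.coeff_sin\<close> into \<open>trig_comb\<close> and exchanging the sums.\<close>
definition interp_kernel :: "nat \<Rightarrow> real \<Rightarrow> real" where
  "interp_kernel m = trig_comb (\<lambda>j. (if j = 0 then 1 else 2) / real (2 * k + 1) * cos_mode j (node m))
                                (\<lambda>j. 2 / real (2 * k + 1) * sin_mode j (node m))"

lemma interp_kernel_in_trig_poly: "interp_kernel m \<in> trig_poly a b k"
  unfolding interp_kernel_def by (rule trig_comb_in_trig_poly)

lemma interpolant_in_trig_poly: "(\<lambda>x. \<Sum>m<2 * k + 1. y m * interp_kernel m x) \<in> trig_poly a b k"
  unfolding interp_kernel_def sum_trig_comb by (rule trig_comb_in_trig_poly)

lemma trig_poly_interpolation:
  assumes "f \<in> trig_poly a b k"
  shows "f = (\<lambda>x. \<Sum>m<2 * k + 1. f (node m) * interp_kernel m x)"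
proof -
  have "f = trig_comb (sampling.coeff_cos f) (sampling.coeff_sin f)"
    using sampling.trig_comb_coeff[OF assms] by simp
  also have "\<dots> = (\<lambda>x. \<Sum>m<2 * k + 1. f (node m) * interp_kernel m x)"
    unfolding interp_kernel_def sum_trig_comb sampling.coeff_cos_def sampling.coeff_sin_def sum_distrib_left
    by (intro ext arg_cong2[where f=trig_comb] sum.cong) (simp_all add: fun_eq_iff mult_ac)
  finally show ?thesis .
qed

lemma interpolant_has_derivative:
  "((\<lambda>x. \<Sum>m<2 * k + 1. y m * interp_kernel m x) has_real_derivative
      (\<Sum>m<2 * k + 1. y m * deriv (interp_kernel m) x)) (at x)"
  by (intro DERIV_sum DERIV_cmult trig_poly_has_derivative interp_kernel_in_trig_poly)

lemma deriv_trig_poly_interpolation: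
  assumes "f \<in> trig_poly a b k"
  shows "deriv f x = (\<Sum>m<2 * k + 1. f (node m) * deriv (interp_kernel m) x)"
  using interpolant_has_derivative[of "\<lambda>m. f (node m)", folded trig_poly_interpolation[OF assms]]
  by (rule DERIV_imp_deriv)

end

locale trig_curve = trig_poly_space +
  fixes I :: "real set" and u u' :: "real \<Rightarrow> real \<Rightarrow> real"
  assumes open_I: "open I"
    and curve_in: "\<forall>t\<in>I. u t \<in> trig_poly a b k"
    and curve_has_derivative: "\<forall>t\<in>I. \<forall>x. ((\<lambda>s. u s x) has_real_derivative u' t x) (at t)"
    and velocity_continuous: "\<forall>x. continuous_on I (\<lambda>s. u' s x)"
begin

lemma curve_interpolation:
  "t \<in> I \<Longrightarrow> u t x = (\<Sum>m<2 * k + 1. u t (node m) * interp_kernel m x)"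
  using curve_in by (intro fun_cong[OF trig_poly_interpolation]) blast

lemma velocity_interpolation:
  assumes t: "t \<in> I"
  shows "u' t x = (\<Sum>m<2 * k + 1. u' t (node m) * interp_kernel m x)"
proof -
  have "((\<lambda>s. \<Sum>m<2 * k + 1. u s (node m) * interp_kernel m x) has_real_derivative
      (\<Sum>m<2 * k + 1. u' t (node m) * interp_kernel m x)) (at t)"
    using curve_has_derivative t by (intro DERIV_sum DERIV_cmult_right) auto
  then have "((\<lambda>s. u s x) has_real_derivative (\<Sum>m<2 * k + 1. u' t (node m) * interp_kernel m x)) (at t)"
    by (rule has_field_derivative_transform_within_open[OF _ open_I t]) (rule curve_interpolation[symmetric])
  then show ?thesis
    using curve_has_derivative t DERIV_unique by blast
qed

lemma velocity_in_trig_poly: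
  assumes "t \<in> I"
  shows "u' t \<in> trig_poly a b k"
proof -
  have "u' t = (\<lambda>x. \<Sum>m<2 * k + 1. u' t (node m) * interp_kernel m x)"
    using velocity_interpolation[OF assms] by (rule ext)
  then show ?thesis
    using interpolant_in_trig_poly by metis
qed

lemma curve_continuous_on [continuous_intros]:
  "t \<in> I \<Longrightarrow> continuous_on S (u t)" "t \<in> I \<Longrightarrow> continuous_on S (deriv (u t))"
  using curve_in by (auto intro: trig_poly_continuous_on)

lemma curve_has_derivative_within [derivative_intros]:
  "t \<in> I \<Longrightarrow> ((\<lambda>s. u s x) has_real_derivative u' t x) (at t within S)"
  using curve_has_derivative has_field_derivative_at_within by blast

lemma deriv_curve_has_derivative_within [derivative_intros]:
  assumes t: "t \<in> I"
  shows "((\<lambda>s. deriv (u s) x) has_real_derivative deriv (u' t) x) (at t within S)"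
proof -
  have "((\<lambda>s. \<Sum>m<2 * k + 1. u s (node m) * deriv (interp_kernel m) x) has_real_derivative
      (\<Sum>m<2 * k + 1. u' t (node m) * deriv (interp_kernel m) x)) (at t)"
    using curve_has_derivative t by (intro DERIV_sum DERIV_cmult_right) auto
  then have "((\<lambda>s. deriv (u s) x) has_real_derivative deriv (u' t) x) (at t)"
    unfolding deriv_trig_poly_interpolation[OF velocity_in_trig_poly[OF t], symmetric]
    by (rule has_field_derivative_transform_within_open[OF _ open_I t])
      (use curve_in in \<open>blast intro: deriv_trig_poly_interpolation[symmetric]\<close>)
  then show ?thesis
    by (rule has_field_derivative_at_within)
qed

lemma curve_joint_continuous [continuous_intros]:
  "continuous_on (I \<times> S) (\<lambda>p. u (fst p) (snd p))"
  "continuous_on (I \<times> S) (\<lambda>p. u' (fst p) (snd p))"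
  "continuous_on (I \<times> S) (\<lambda>p. deriv (u (fst p)) (snd p))"
  "continuous_on (I \<times> S) (\<lambda>p. deriv (u' (fst p)) (snd p))"
proof -
  have node_cont: "continuous_on I (\<lambda>t. u t (node m))" "continuous_on I (\<lambda>t. u' t (node m))" for m
    using curve_has_derivative velocity_continuous
    by (auto intro!: continuous_at_imp_continuous_on DERIV_isCont)
  have kernel_cont: "continuous_on S (interp_kernel m)" "continuous_on S (deriv (interp_kernel m))" for m
    using interp_kernel_in_trig_poly by (auto intro: trig_poly_continuous_on)
  show "continuous_on (I \<times> S) (\<lambda>p. u (fst p) (snd p))"
  proof (rule continuous_on_eq[OF continuous_on_separated_sum[where A = "{..<2 * k + 1}"
        and \<alpha> = "\<lambda>m t. u t (node m)" and \<phi> = interp_kernel]])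
    fix p assume "p \<in> I \<times> S"
    then show "(\<Sum>m<2 * k + 1. u (fst p) (node m) * interp_kernel m (snd p)) = u (fst p) (snd p)"
      by (intro curve_interpolation[symmetric]) auto
  qed (simp_all add: node_cont kernel_cont)
  show "continuous_on (I \<times> S) (\<lambda>p. u' (fst p) (snd p))"
  proof (rule continuous_on_eq[OF continuous_on_separated_sum[where A = "{..<2 * k + 1}"
        and \<alpha> = "\<lambda>m t. u' t (node m)" and \<phi> = interp_kernel]])
    fix p assume "p \<in> I \<times> S"
    then show "(\<Sum>m<2 * k + 1. u' (fst p) (node m) * interp_kernel m (snd p)) = u' (fst p) (snd p)"
      by (intro velocity_interpolation[symmetric]) auto
  qed (simp_all add: node_cont kernel_cont)
  show "continuous_on (I \<times> S) (\<lambda>p. deriv (u (fst p)) (snd p))"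
  proof (rule continuous_on_eq[OF continuous_on_separated_sum[where A = "{..<2 * k + 1}"
        and \<alpha> = "\<lambda>m t. u t (node m)" and \<phi> = "\<lambda>m. deriv (interp_kernel m)"]])
    fix p assume "p \<in> I \<times> S"
    then show "(\<Sum>m<2 * k + 1. u (fst p) (node m) * deriv (interp_kernel m) (snd p)) = deriv (u (fst p)) (snd p)"
      using curve_in by (intro deriv_trig_poly_interpolation[symmetric]) auto
  qed (simp_all add: node_cont kernel_cont)
  show "continuous_on (I \<times> S) (\<lambda>p. deriv (u' (fst p)) (snd p))"
  proof (rule continuous_on_eq[OF continuous_on_separated_sum[where A = "{..<2 * k + 1}"
        and \<alpha> = "\<lambda>m t. u' t (node m)" and \<phi> = "\<lambda>m. deriv (interp_kernel m)"]])
    fix p assume "p \<in> I \<times> S"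
    then show "(\<Sum>m<2 * k + 1. u' (fst p) (node m) * deriv (interp_kernel m) (snd p)) = deriv (u' (fst p)) (snd p)"
      using velocity_in_trig_poly by (intro deriv_trig_poly_interpolation[symmetric]) auto
  qed (simp_all add: node_cont kernel_cont)
qed

end

section \<open>Conservation laws\<close>

locale nls_galerkin_state = trig_poly_space +
  fixes \<beta> :: real and V W V' W' :: "real \<Rightarrow> real"
  assumes V_in: "V \<in> trig_poly a b k" and W_in: "W \<in> trig_poly a b k"
    and V'_eq: "\<And>x. V' x = - deriv (deriv W) x - \<beta> * L2_proj a b k (\<lambda>y. ((V y)\<^sup>2 + (W y)\<^sup>2) * W y) x"
    and W'_eq: "\<And>x. W' x = deriv (deriv V) x + \<beta> * L2_proj a b k (\<lambda>y. ((V y)\<^sup>2 + (W y)\<^sup>2) * V y) x"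
begin

definition cubic_V :: "real \<Rightarrow> real" where
  "cubic_V y = ((V y)\<^sup>2 + (W y)\<^sup>2) * V y"

definition cubic_W :: "real \<Rightarrow> real" where
  "cubic_W y = ((V y)\<^sup>2 + (W y)\<^sup>2) * W y"

lemma velocity_eq:
  "V' x = - deriv (deriv W) x - \<beta> * L2_proj a b k cubic_W x"
  "W' x = deriv (deriv V) x + \<beta> * L2_proj a b k cubic_V x"
  by (simp_all add: V'_eq W'_eq cubic_V_def[abs_def] cubic_W_def[abs_def])

lemma state_continuous_on [continuous_intros]:
  "continuous_on S V" "continuous_on S W" "continuous_on S (deriv V)" "continuous_on S (deriv W)"
  "continuous_on S (deriv (deriv V))" "continuous_on S (deriv (deriv W))"
  using V_in W_in by (auto intro: trig_poly_continuous_on)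

lemma cubic_continuous_on [continuous_intros]:
  "continuous_on S cubic_V" "continuous_on S cubic_W"
  unfolding cubic_V_def[abs_def] cubic_W_def[abs_def] by (intro continuous_intros)+

lemma proj_cubic_in_trig_poly:
  "L2_proj a b k cubic_V \<in> trig_poly a b k" "L2_proj a b k cubic_W \<in> trig_poly a b k"
  by (simp_all add: L2_proj_in_trig_poly cubic_continuous_on)

lemma velocity_in_trig_poly: "V' \<in> trig_poly a b k" "W' \<in> trig_poly a b k"
proof -
  have "V' = (\<lambda>x. (- 1) * deriv (deriv W) x + (- \<beta>) * L2_proj a b k cubic_W x)"
    by (simp add: fun_eq_iff velocity_eq)
  then show "V' \<in> trig_poly a b k"
    using W_in proj_cubic_in_trig_poly by (simp only: trig_poly_lincomb deriv_in_trig_poly)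
  have "W' = (\<lambda>x. 1 * deriv (deriv V) x + \<beta> * L2_proj a b k cubic_V x)"
    by (simp add: fun_eq_iff velocity_eq)
  then show "W' \<in> trig_poly a b k"
    using V_in proj_cubic_in_trig_poly by (simp only: trig_poly_lincomb deriv_in_trig_poly)
qed

lemma velocity_continuous_on [continuous_intros]:
  "continuous_on S V'" "continuous_on S W'" "continuous_on S (deriv V')" "continuous_on S (deriv W')"
  "continuous_on S (L2_proj a b k cubic_V)" "continuous_on S (L2_proj a b k cubic_W)"
  using velocity_in_trig_poly proj_cubic_in_trig_poly by (auto intro: trig_poly_continuous_on)

text \<open>\<open>mult.left_commute[of _ \<beta>]\<close> moves \<beta> to the front of products, where
  \<open>integral_mult_right\<close> pulls it out of the integral.\<close>
lemmas integral_split =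
  integral_add integral_diff integrable_continuous_interval continuous_intros ring_distribs mult.assoc
  mult.left_commute[of _ \<beta>]

lemma mass_rate_zero: "integral {a..b} (\<lambda>x. 2 * V x * V' x + 2 * W x * W' x) = 0"
proof -
  have proj_sym: "integral {a..b} (\<lambda>x. V x * L2_proj a b k cubic_W x)
      = integral {a..b} (\<lambda>x. W x * L2_proj a b k cubic_V x)"
    using integral_L2_proj_mult[OF cubic_continuous_on(1) W_in] integral_L2_proj_mult[OF cubic_continuous_on(2) V_in]
    by (simp add: cubic_V_def cubic_W_def mult_ac)
  show ?thesis
    using integral_mult_second_deriv_trig_poly[OF V_in W_in] proj_sym
    by (simp add: velocity_eq integral_split)
qed

lemma integral_potential_flux_zero:
  "integral {a..b} (\<lambda>x. cubic_V x * deriv V x + cubic_W x * deriv W x) = 0"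
proof (rule integral_periodic_derivative_zero[where F = "\<lambda>x. ((V x)\<^sup>2 + (W x)\<^sup>2)\<^sup>2 / 4"])
  show "((\<lambda>x. ((V x)\<^sup>2 + (W x)\<^sup>2)\<^sup>2 / 4) has_real_derivative cubic_V x * deriv V x + cubic_W x * deriv W x) (at x)"
    for x
    using V_in W_in unfolding cubic_V_def cubic_W_def
    by (auto intro!: derivative_eq_intros trig_poly_has_derivative simp: algebra_simps power2_eq_square)
qed (use a_less_b trig_poly_periodic[OF V_in] trig_poly_periodic[OF W_in] in auto)

lemma momentum_rate_zero:
  "integral {a..b} (\<lambda>x. V' x * deriv W x + V x * deriv W' x - W' x * deriv V x - W x * deriv V' x) = 0"
proof -
  have by_parts: "integral {a..b} (\<lambda>x. V x * deriv W' x) = - integral {a..b} (\<lambda>x. W' x * deriv V x)"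
      "integral {a..b} (\<lambda>x. W x * deriv V' x) = - integral {a..b} (\<lambda>x. V' x * deriv W x)"
    using integral_deriv_mult_trig_poly[OF velocity_in_trig_poly(2) V_in]
      integral_deriv_mult_trig_poly[OF velocity_in_trig_poly(1) W_in]
    by (simp_all add: mult.commute)
  have kinetic: "integral {a..b} (\<lambda>x. deriv (deriv V) x * deriv V x) = 0"
      "integral {a..b} (\<lambda>x. deriv (deriv W) x * deriv W x) = 0"
    using V_in W_in by (simp_all add: integral_deriv_mult_self_trig_poly deriv_in_trig_poly)
  have proj: "integral {a..b} (\<lambda>x. L2_proj a b k cubic_V x * deriv V x) = integral {a..b} (\<lambda>x. cubic_V x * deriv V x)"
      "integral {a..b} (\<lambda>x. L2_proj a b k cubic_W x * deriv W x) = integral {a..b} (\<lambda>x. cubic_W x * deriv W x)"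
    using V_in W_in by (simp_all add: integral_L2_proj_mult cubic_continuous_on deriv_in_trig_poly)
  have "integral {a..b} (\<lambda>x. V' x * deriv W x + V x * deriv W' x - W' x * deriv V x - W x * deriv V' x)
      = 2 * integral {a..b} (\<lambda>x. V' x * deriv W x) - 2 * integral {a..b} (\<lambda>x. W' x * deriv V x)"
    using by_parts by (simp add: integral_split)
  also have "\<dots> = - 2 * \<beta> * (integral {a..b} (\<lambda>x. cubic_V x * deriv V x) + integral {a..b} (\<lambda>x. cubic_W x * deriv W x))"
    using kinetic proj by (simp add: velocity_eq integral_split algebra_simps)
  also have "\<dots> = 0"
    using integral_potential_flux_zero by (simp add: integral_split)
  finally show ?thesis .
qed

lemma energy_rate_zero:
  "integral {a..b} (\<lambda>x. 2 * deriv V x * deriv V' x + 2 * deriv W x * deriv W' x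
      - 2 * \<beta> * ((V x)\<^sup>2 + (W x)\<^sup>2) * (V x * V' x + W x * W' x)) = 0"
proof -
  have by_parts: "integral {a..b} (\<lambda>x. deriv V x * deriv V' x) = - integral {a..b} (\<lambda>x. deriv (deriv V) x * V' x)"
      "integral {a..b} (\<lambda>x. deriv W x * deriv W' x) = - integral {a..b} (\<lambda>x. deriv (deriv W) x * W' x)"
    using integral_deriv_mult_trig_poly[OF deriv_in_trig_poly[OF V_in] velocity_in_trig_poly(1)]
      integral_deriv_mult_trig_poly[OF deriv_in_trig_poly[OF W_in] velocity_in_trig_poly(2)]
    by simp_all
  have proj: "integral {a..b} (\<lambda>x. L2_proj a b k cubic_V x * V' x) = integral {a..b} (\<lambda>x. cubic_V x * V' x)"
      "integral {a..b} (\<lambda>x. L2_proj a b k cubic_W x * W' x) = integral {a..b} (\<lambda>x. cubic_W x * W' x)"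
    using velocity_in_trig_poly by (simp_all add: integral_L2_proj_mult cubic_continuous_on)
  have integrand: "(\<lambda>x. 2 * deriv V x * deriv V' x + 2 * deriv W x * deriv W' x
      - 2 * \<beta> * ((V x)\<^sup>2 + (W x)\<^sup>2) * (V x * V' x + W x * W' x))
      = (\<lambda>x. 2 * (deriv V x * deriv V' x) + 2 * (deriv W x * deriv W' x)
      - 2 * \<beta> * (cubic_V x * V' x) - 2 * \<beta> * (cubic_W x * W' x))"
    unfolding cubic_V_def cubic_W_def by (rule ext) (simp add: algebra_simps)
  have second_deriv: "deriv (deriv V) x = W' x - \<beta> * L2_proj a b k cubic_V x"
      "deriv (deriv W) x = - V' x - \<beta> * L2_proj a b k cubic_W x" for x
    by (simp_all add: velocity_eq)
  have "integral {a..b} (\<lambda>x. deriv (deriv V) x * V' x)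
      = integral {a..b} (\<lambda>x. V' x * W' x) - \<beta> * integral {a..b} (\<lambda>x. cubic_V x * V' x)"
    using proj(1) by (simp add: second_deriv integral_split mult.commute[of "W' _"])
  moreover have "integral {a..b} (\<lambda>x. deriv (deriv W) x * W' x)
      = - integral {a..b} (\<lambda>x. V' x * W' x) - \<beta> * integral {a..b} (\<lambda>x. cubic_W x * W' x)"
    using proj(2) by (simp add: second_deriv integral_split)
  ultimately show ?thesis
    unfolding integrand using by_parts by (simp add: integral_split)
qed

end

locale nls_galerkin_flow =
  v: trig_curve a b k I v v' + w: trig_curve a b k I w w' for a b k I v v' w w' +
  fixes \<beta> :: real
  assumes I_interval: "is_interval I"
    and v_eq: "\<forall>t\<in>I. \<forall>x. v' t x = - deriv (deriv (w t)) x
        - \<beta> * L2_proj a b k (\<lambda>y. ((v t y)\<^sup>2 + (w t y)\<^sup>2) * w t y) x"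
    and w_eq: "\<forall>t\<in>I. \<forall>x. w' t x = deriv (deriv (v t)) x
        + \<beta> * L2_proj a b k (\<lambda>y. ((v t y)\<^sup>2 + (w t y)\<^sup>2) * v t y) x"
begin

lemma I_convex: "convex I"
  using I_interval by (rule is_interval_convex)

lemma galerkin_state: "t \<in> I \<Longrightarrow> nls_galerkin_state a b k \<beta> (v t) (w t) (v' t) (w' t)"
  by unfold_locales (use v.a_less_b v.curve_in w.curve_in v_eq w_eq in auto)

lemma mass_conserved:
  assumes "t1 \<in> I" and "t2 \<in> I"
  shows "nls_mass a b (v t1) (w t1) = nls_mass a b (v t2) (w t2)"
  unfolding nls_mass_def
proof (rule integral_parametric_constant[OF I_convex _ _ _ _ assms,
      where F' = "\<lambda>t x. 2 * v t x * v' t x + 2 * w t x * w' t x"])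
  show "((\<lambda>s. (v s x)\<^sup>2 + (w s x)\<^sup>2) has_real_derivative 2 * v t x * v' t x + 2 * w t x * w' t x) (at t within I)"
    if "t \<in> I" for t x
    using that by (auto intro!: derivative_eq_intros)
  show "continuous_on {a..b} (\<lambda>x. (v t x)\<^sup>2 + (w t x)\<^sup>2)" if "t \<in> I" for t
    using that by (intro continuous_intros)
  show "continuous_on (I \<times> {a..b}) (\<lambda>(t, x). 2 * v t x * v' t x + 2 * w t x * w' t x)"
    unfolding case_prod_beta by (intro continuous_intros)
  show "integral {a..b} (\<lambda>x. 2 * v t x * v' t x + 2 * w t x * w' t x) = 0" if "t \<in> I" for t
    using nls_galerkin_state.mass_rate_zero[OF galerkin_state[OF that]] .
qed

lemma momentum_conserved:
  assumes "t1 \<in> I" and "t2 \<in> I"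
  shows "nls_momentum a b (v t1) (w t1) = nls_momentum a b (v t2) (w t2)"
  unfolding nls_momentum_def
proof (rule integral_parametric_constant[OF I_convex _ _ _ _ assms,
      where F' = "\<lambda>t x. v' t x * deriv (w t) x + v t x * deriv (w' t) x
                       - w' t x * deriv (v t) x - w t x * deriv (v' t) x"])
  show "((\<lambda>s. v s x * deriv (w s) x - w s x * deriv (v s) x) has_real_derivative
      v' t x * deriv (w t) x + v t x * deriv (w' t) x - w' t x * deriv (v t) x - w t x * deriv (v' t) x)
      (at t within I)" if "t \<in> I" for t x
    using that by (auto intro!: derivative_eq_intros)
  show "continuous_on {a..b} (\<lambda>x. v t x * deriv (w t) x - w t x * deriv (v t) x)" if "t \<in> I" for t
    using that by (intro continuous_intros)
  show "continuous_on (I \<times> {a..b}) (\<lambda>(t, x). v' t x * deriv (w t) x + v t x * deriv (w' t) x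
      - w' t x * deriv (v t) x - w t x * deriv (v' t) x)"
    unfolding case_prod_beta by (intro continuous_intros)
  show "integral {a..b} (\<lambda>x. v' t x * deriv (w t) x + v t x * deriv (w' t) x
      - w' t x * deriv (v t) x - w t x * deriv (v' t) x) = 0" if "t \<in> I" for t
    using nls_galerkin_state.momentum_rate_zero[OF galerkin_state[OF that]] .
qed

lemma energy_conserved:
  assumes "t1 \<in> I" and "t2 \<in> I"
  shows "nls_energy \<beta> a b (v t1) (w t1) = nls_energy \<beta> a b (v t2) (w t2)"
  unfolding nls_energy_def
proof (rule integral_parametric_constant[OF I_convex _ _ _ _ assms,
      where F' = "\<lambda>t x. 2 * deriv (v t) x * deriv (v' t) x + 2 * deriv (w t) x * deriv (w' t) x
                       - 2 * \<beta> * ((v t x)\<^sup>2 + (w t x)\<^sup>2) * (v t x * v' t x + w t x * w' t x)"])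
  show "((\<lambda>s. (deriv (v s) x)\<^sup>2 + (deriv (w s) x)\<^sup>2 - \<beta> / 2 * ((v s x)\<^sup>2 + (w s x)\<^sup>2)\<^sup>2)
      has_real_derivative 2 * deriv (v t) x * deriv (v' t) x + 2 * deriv (w t) x * deriv (w' t) x
        - 2 * \<beta> * ((v t x)\<^sup>2 + (w t x)\<^sup>2) * (v t x * v' t x + w t x * w' t x)) (at t within I)"
    if "t \<in> I" for t x
    using that by (auto intro!: derivative_eq_intros simp: algebra_simps power2_eq_square)
  show "continuous_on {a..b} (\<lambda>x. (deriv (v t) x)\<^sup>2 + (deriv (w t) x)\<^sup>2 - \<beta> / 2 * ((v t x)\<^sup>2 + (w t x)\<^sup>2)\<^sup>2)"
    if "t \<in> I" for t
    using that by (intro continuous_intros)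
  show "continuous_on (I \<times> {a..b}) (\<lambda>(t, x). 2 * deriv (v t) x * deriv (v' t) x + 2 * deriv (w t) x * deriv (w' t) x
      - 2 * \<beta> * ((v t x)\<^sup>2 + (w t x)\<^sup>2) * (v t x * v' t x + w t x * w' t x))"
    unfolding case_prod_beta by (intro continuous_intros)
  show "integral {a..b} (\<lambda>x. 2 * deriv (v t) x * deriv (v' t) x + 2 * deriv (w t) x * deriv (w' t) x
      - 2 * \<beta> * ((v t x)\<^sup>2 + (w t x)\<^sup>2) * (v t x * v' t x + w t x * w' t x)) = 0" if "t \<in> I" for t
    using nls_galerkin_state.energy_rate_zero[OF galerkin_state[OF that]] .
qed

end

theorem theorem2p3:
  fixes a b \<beta> :: real and k :: nat and I :: "real set"
    and v w v' w' :: "real \<Rightarrow> real \<Rightarrow> real"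
  assumes ab: "a < b"
    and I_open: "open I" and I_interval: "is_interval I"
    and v_Tk: "\<forall>t\<in>I. v t \<in> trig_poly a b k"
    and w_Tk: "\<forall>t\<in>I. w t \<in> trig_poly a b k"
    and v_diff: "\<forall>t\<in>I. \<forall>x. ((\<lambda>s. v s x) has_real_derivative v' t x) (at t)"
    and w_diff: "\<forall>t\<in>I. \<forall>x. ((\<lambda>s. w s x) has_real_derivative w' t x) (at t)"
    and v'_cont: "\<forall>x. continuous_on I (\<lambda>s. v' s x)"
    and w'_cont: "\<forall>x. continuous_on I (\<lambda>s. w' s x)"
    and v_eq: "\<forall>t\<in>I. \<forall>x. v' t x = - deriv (deriv (w t)) x
        - \<beta> * L2_proj a b k (\<lambda>y. ((v t y)\<^sup>2 + (w t y)\<^sup>2) * w t y) x"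
    and w_eq: "\<forall>t\<in>I. \<forall>x. w' t x = deriv (deriv (v t)) x
        + \<beta> * L2_proj a b k (\<lambda>y. ((v t y)\<^sup>2 + (w t y)\<^sup>2) * v t y) x"
  shows "\<forall>t1\<in>I. \<forall>t2\<in>I.
           nls_mass a b (v t1) (w t1) = nls_mass a b (v t2) (w t2) \<and>
           nls_momentum a b (v t1) (w t1) = nls_momentum a b (v t2) (w t2) \<and>
           nls_energy \<beta> a b (v t1) (w t1) = nls_energy \<beta> a b (v t2) (w t2)"
proof -
  interpret nls_galerkin_flow a b k I v v' w w' \<beta>
    by unfold_locales (fact assms)+
  show ?thesis
    using mass_conserved momentum_conserved energy_conserved by blast
qed

end
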